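(* Let the matrices $E^{(0,1,1)},E^{(1,0,1)},E^{(1,1,0)},E^{(1,1,1)},D^{(2)}$ and the difference matrices $\mathfrak D_q,\mathfrak D_{q,\mathrm{per}}$ be as in the context. For every $\mathbf h\in\mathbb R^{n_2}$, set $\mathbf h^1=(E^{(0,1,1)})^T\mathbf h\in\mathbb R^{n^r(n^s-1)n^t}$, $\mathbf h^2=(E^{(1,0,1)})^T\mathbf h\in\mathbb R^{n^rn^sn^t}$, $\mathbf h^3=(E^{(1,1,0)})^T\mathbf h\in\mathbb R^{n^r(n^s-1)n^t}$. Then $$(I_{n^t}\otimes I_{n^s-1}\otimes\mathfrak D_{n^r,\mathrm{per}})\mathbf h^1+(I_{n^t}\otimes\mathfrak D_{n^s}\otimes I_{n^r})\mathbf h^2+(\mathfrak D_{n^t,\mathrm{per}}\otimes I_{n^s-1}\otimes I_{n^r})\mathbf h^3=(E^{(1,1,1)})^TD^{(2)}\mathbf h .$$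
   Context: Fix integers $n^r,n^s,n^t$ (large enough for all index ranges to make sense). Put $\bar n_1=2n^r(n^s-2)+2$, $\bar n_2=n^r(n^s-2)$, $n_2=n^t(\bar n_1+\bar n_2)$, $n_3=n^t\bar n_2$. Let $\theta_i=2\pi+\frac{(1-2i)\pi}{n^r}$ and, for $i=1,\dots,n^r$, $\bar E_{\ell,(i,1)}=\frac13$ ($\ell=1,2,3$), $\bar E_{1,(i,2)}=\frac13+\frac13\cos\theta_i$, $\bar E_{2,(i,2)}=\frac13-\frac16\cos\theta_i+\frac{\sqrt3}6\sin\theta_i$, $\bar E_{3,(i,2)}=\frac13-\frac16\cos\theta_i-\frac{\sqrt3}6\sin\theta_i$; set $\bar E_{\ell,(n^r+1,2)}:=\bar E_{\ell,(1,2)}$ and $\bar E_{\ell,(\Delta i,2)}:=\bar E_{\ell,(i+1,2)}-\bar E_{\ell,(i,2)}$. $E^{(1,0)}$ ($\bar n_1\times n^rn^s$): $y=E^{(1,0)}x$ has $y_\ell=\sum_{i=1}^{n^r}\bar E_{\ell+1,(\Delta i,2)}x_{i+n^r}$ ($\ell=1,2$) and, for $j=3,\dots,n^s$, $i=1,\dots,n^r$, $y_{2+i+(2j-6)n^r}=0$, $y_{2+i+(2j-5)n^r}=x_{i+(j-1)n^r}$. $E^{(0,1)}$ ($\bar n_1\times n^r(n^s-1)$): $y=E^{(0,1)}x$ has $y_\ell=\sum_{i=1}^{n^r}(\bar E_{\ell+1,(i,2)}-\bar E_{\ell+1,(i,1)})x_i$ ($\ell=1,2$) and, for $j=2,\dots,n^s-1$,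 $i=1,\dots,n^r$, $y_{2+i+(2j-4)n^r}=x_{i+(j-1)n^r}$, $y_{2+i+(2j-3)n^r}=0$. $E^{(2)}=[0_{\bar n_2\times n^r}\,|\,I_{\bar n_2}]$. With $[A;B]$ vertical stacking and $0_{a\times b}$ zero matrices: $E^{(0,1,1)}=I_{n^t}\otimes[0_{\bar n_2\times n^r(n^s-1)};E^{(0,1)}]$, $E^{(1,0,1)}=I_{n^t}\otimes[0_{\bar n_2\times n^rn^s};-E^{(1,0)}]$, $E^{(1,1,0)}=I_{n^t}\otimes[E^{(2)};0_{\bar n_1\times n^r(n^s-1)}]$, $E^{(1,1,1)}=I_{n^t}\otimes E^{(2)}$. Difference matrices: $\mathfrak D_q$ is $(q-1)\times q$ with row $j$ having $-1$ in column $j$ and $1$ in column $j+1$; $\mathfrak D_{q,\mathrm{per}}$ is $q\times q$ with row $j<q$ having $-1$ in column $j$ and $1$ in column $j+1$, and last row having $1$ in column $1$ and $-1$ in column $q$. $D^{(2)}$ is the $n_3\times n_2$ matrix with $\mathbf m=D^{(2)}\mathbf h$ given as follows. Let $\sigma(i)=i+1$ for $i<n^r$, $\sigma(n^r)=1$. For $k=1,\dots,n^t$ put $c=k\bar n_2+(k-1)\bar n_1$, $d=(k-1)(\bar n_1+\bar n_2)$, $d'=k(\bar n_1+\bar n_2)$, with the convention that an index $n_2+q$ means $q$. For $i=1,\dots,n^r$: $m_{i+(k-1)\bar n_2}=h_{2+\sigma(i)+c}-h_{2+i+c}-h_{2+i+n^r+c}+\sum_{\ell=1}^2\bar E_{\ell+1,(\Delta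 i,2)}h_{\ell+c}+h_{i+d'}-h_{i+d}$; and for $j=2,\dots,n^s-2$, $i=1,\dots,n^r$: $m_{i+(j-1)n^r+(k-1)\bar n_2}=h_{2+\sigma(i)+(2j-2)n^r+c}-h_{2+i+(2j-2)n^r+c}-h_{2+i+(2j-1)n^r+c}+h_{2+i+(2j-3)n^r+c}+h_{i+(j-1)n^r+d'}-h_{i+(j-1)n^r+d}$. *)

theory Defs
  imports Complex_Main "Jordan_Normal_Form.Matrix"
begin

text \<open>The paper uses 1-based indices; entry (a,b) of a paper matrix (1-based) is stored at
  position (a-1,b-1). Parameters: nr = n^r, ns = n^s, nt = n^t.\<close>

definition nbar1 :: "nat \<Rightarrow> nat \<Rightarrow> nat" where
  "nbar1 nr ns = 2 * nr * (ns - 2) + 2"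
definition nbar2 :: "nat \<Rightarrow> nat \<Rightarrow> nat" where
  "nbar2 nr ns = nr * (ns - 2)"
definition nn2 :: "nat \<Rightarrow> nat \<Rightarrow> nat \<Rightarrow> nat" where
  "nn2 nr ns nt = nt * (nbar1 nr ns + nbar2 nr ns)"
definition nn3 :: "nat \<Rightarrow> nat \<Rightarrow> nat \<Rightarrow> nat" where
  "nn3 nr ns nt = nt * nbar2 nr ns"

definition theta :: "nat \<Rightarrow> nat \<Rightarrow> real" where
  "theta nr i = 2 * pi + (1 - 2 * real i) * pi / real nr"

text \<open>\<open>Ebar1 l i\<close> is \<open>\<bar>E\<close>_{l,(i,1)}; \<open>Ebar2 nr l i\<close> is \<open>\<bar>E\<close>_{l,(i,2)} for i = 1..nr,
  with the convention \<open>\<bar>E\<close>_{l,(nr+1,2)} = \<open>\<bar>E\<close>_{l,(1,2)}.\<close>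
definition Ebar1 :: "nat \<Rightarrow> nat \<Rightarrow> real" where
  "Ebar1 l i = 1 / 3"

definition Ebar2 :: "nat \<Rightarrow> nat \<Rightarrow> nat \<Rightarrow> real" where
  "Ebar2 nr l i = (let t = theta nr (if i = nr + 1 then 1 else i) in
     if l = 1 then 1/3 + 1/3 * cos t
     else if l = 2 then 1/3 - 1/6 * cos t + sqrt 3 / 6 * sin t
     else if l = 3 then 1/3 - 1/6 * cos t - sqrt 3 / 6 * sin t
     else 0)"

definition EbarD :: "nat \<Rightarrow> nat \<Rightarrow> nat \<Rightarrow> real" where
  "EbarD nr l i = Ebar2 nr l (i + 1) - Ebar2 nr l i"

definition kron :: "real mat \<Rightarrow> real mat \<Rightarrow> real mat" where
  "kron A B = mat (dim_row A * dim_row B) (dim_col A * dim_col B)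
     (\<lambda>(i, j). A $$ (i div dim_row B, j div dim_col B) * B $$ (i mod dim_row B, j mod dim_col B))"

definition vstack :: "real mat \<Rightarrow> real mat \<Rightarrow> real mat" where
  "vstack A B = mat (dim_row A + dim_row B) (dim_col A)
     (\<lambda>(i, j). if i < dim_row A then A $$ (i, j) else B $$ (i - dim_row A, j))"

definition hstack :: "real mat \<Rightarrow> real mat \<Rightarrow> real mat" where
  "hstack A B = mat (dim_row A) (dim_col A + dim_col B)
     (\<lambda>(i, j). if j < dim_col A then A $$ (i, j) else B $$ (i, j - dim_col A))"

text \<open>Entries (1-based) of E^(1,0) and E^(0,1), read off from the description y = E x.\<close>
definition E10_entry :: "nat \<Rightarrow> nat \<Rightarrow> nat \<Rightarrow> nat \<Rightarrow> real" where
  "E10_entry nr ns a b =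
     (if a = 1 \<or> a = 2 then (if nr < b \<and> b \<le> 2 * nr then EbarD nr (a + 1) (b - nr) else 0)
      else if (\<exists>j\<in>{3..ns}. \<exists>i\<in>{1..nr}. a = 2 + i + (2 * j - 5) * nr \<and> b = i + (j - 1) * nr)
      then 1 else 0)"

definition E10 :: "nat \<Rightarrow> nat \<Rightarrow> real mat" where
  "E10 nr ns = mat (nbar1 nr ns) (nr * ns) (\<lambda>(a, b). E10_entry nr ns (a + 1) (b + 1))"

definition E01_entry :: "nat \<Rightarrow> nat \<Rightarrow> nat \<Rightarrow> nat \<Rightarrow> real" where
  "E01_entry nr ns a b =
     (if a = 1 \<or> a = 2 then (if 1 \<le> b \<and> b \<le> nr then Ebar2 nr (a + 1) b - Ebar1 (a + 1) b else 0)
      else if (\<exists>j\<in>{2..ns - 1}. \<exists>i\<in>{1..nr}. a = 2 + i + (2 * j - 4) * nr \<and> b = i + (j - 1) * nr)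
      then 1 else 0)"

definition E01 :: "nat \<Rightarrow> nat \<Rightarrow> real mat" where
  "E01 nr ns = mat (nbar1 nr ns) (nr * (ns - 1)) (\<lambda>(a, b). E01_entry nr ns (a + 1) (b + 1))"

definition E2 :: "nat \<Rightarrow> nat \<Rightarrow> real mat" where
  "E2 nr ns = hstack (0\<^sub>m (nbar2 nr ns) nr) (1\<^sub>m (nbar2 nr ns))"

definition E011 :: "nat \<Rightarrow> nat \<Rightarrow> nat \<Rightarrow> real mat" where
  "E011 nr ns nt = kron (1\<^sub>m nt) (vstack (0\<^sub>m (nbar2 nr ns) (nr * (ns - 1))) (E01 nr ns))"

definition E101 :: "nat \<Rightarrow> nat \<Rightarrow> nat \<Rightarrow> real mat" where
  "E101 nr ns nt = kron (1\<^sub>m nt) (vstack (0\<^sub>m (nbar2 nr ns) (nr * ns)) (- E10 nr ns))"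

definition E110 :: "nat \<Rightarrow> nat \<Rightarrow> nat \<Rightarrow> real mat" where
  "E110 nr ns nt = kron (1\<^sub>m nt) (vstack (E2 nr ns) (0\<^sub>m (nbar1 nr ns) (nr * (ns - 1))))"

definition E111 :: "nat \<Rightarrow> nat \<Rightarrow> nat \<Rightarrow> real mat" where
  "E111 nr ns nt = kron (1\<^sub>m nt) (E2 nr ns)"

definition Ddiff :: "nat \<Rightarrow> real mat" where
  "Ddiff q = mat (q - 1) q (\<lambda>(r, c). if c = r then -1 else if c = r + 1 then 1 else 0)"

definition Dper :: "nat \<Rightarrow> real mat" where
  "Dper q = mat q q (\<lambda>(r, c).
     if r + 1 < q then (if c = r then -1 else if c = r + 1 then 1 else 0)
     else (if c = 0 then 1 else 0) - (if c = q - 1 then 1 else 0))"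

text \<open>The linear map h \<mapsto> m = D^(2) h, with 1-based vectors h, m :: nat \<Rightarrow> real.
  An index nn2 + q stands for q.\<close>
definition D2map :: "nat \<Rightarrow> nat \<Rightarrow> nat \<Rightarrow> (nat \<Rightarrow> real) \<Rightarrow> nat \<Rightarrow> real" where
  "D2map nr ns nt h r =
    (let b1 = nbar1 nr ns; b2 = nbar2 nr ns; N2 = nn2 nr ns nt;
         k = (r - 1) div b2 + 1; rm = (r - 1) mod b2;
         j = rm div nr + 1; i = rm mod nr + 1;
         c = k * b2 + (k - 1) * b1; d = (k - 1) * (b1 + b2); d' = k * (b1 + b2);
         H = (\<lambda>q. h (if q > N2 then q - N2 else q));
         \<sigma> = (\<lambda>i. if i < nr then i + 1 else 1)
     in if j = 1 then
          H (2 + \<sigma> i + c) - H (2 + i + c) - H (2 + i + nr + c)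
          + (\<Sum>l\<in>{1..2}. EbarD nr (l + 1) i * H (l + c))
          + H (i + d') - H (i + d)
        else
          H (2 + \<sigma> i + (2 * j - 2) * nr + c) - H (2 + i + (2 * j - 2) * nr + c)
          - H (2 + i + (2 * j - 1) * nr + c) + H (2 + i + (2 * j - 3) * nr + c)
          + H (i + (j - 1) * nr + d') - H (i + (j - 1) * nr + d))"

definition D2 :: "nat \<Rightarrow> nat \<Rightarrow> nat \<Rightarrow> real mat" where
  "D2 nr ns nt = mat (nn3 nr ns nt) (nn2 nr ns nt)
     (\<lambda>(r, q). D2map nr ns nt (\<lambda>p. if p = q + 1 then 1 else 0) (r + 1))"

end

theory Submission
  imports Defs
begin

text \<open>
  Both sides are compared entry by entry at the index (k, j, i) of a vector of length
  n^t (n^s - 1) n^r. Each Kronecker factor acts on a single coordinate: the periodic difference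
  on i and on k, the ordinary difference on j. Reading the columns of E^(0,1), E^(1,0) and E^(2)
  off their definitions expresses h^1, h^2 and h^3 through the k-th block of h. For j = 0 the three
  differences cancel by the periodicity convention for Ebar_{l,(n^r+1,2)}, matching the zero rows
  of (E^(1,1,1))^T; for j > 0 they add up to row (k, j - 1, i) of D^(2) h, whose wrap-around
  convention for indices beyond n_2 is exactly the cyclic difference in k.
\<close>

lemma mult_add_less_mult:
  fixes a b n p :: nat
  assumes "a < n" "b < p"
  shows "a * p + b < n * p"
proof -
  have "a * p + b < Suc a * p" using assms(2) by simp
  also have "\<dots> \<le> n * p" using assms(1) by (intro mult_le_mono1) simp
  finally show ?thesis .
qed

lemma mult_add_eq_mult_add_iff:
  fixes i i' j j' R :: nat
  assumes "i < R" "i' < R"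
  shows "j * R + i = j' * R + i' \<longleftrightarrow> j = j' \<and> i = i'"
proof
  assume eq: "j * R + i = j' * R + i'"
  have "j = (j * R + i) div R" "i = (j * R + i) mod R"
    and "j' = (j' * R + i') div R" "i' = (j' * R + i') mod R"
    using assms by simp_all
  then show "j = j' \<and> i = i'" using eq by metis
qed simp

lemma Suc_mult_add_le_iff:
  fixes i j R :: nat
  assumes "i < R"
  shows "Suc (j * R + i) \<le> R \<longleftrightarrow> j = 0"
  using assms by (cases j) auto

lemma bex_mixed_radix_iff:
  fixes i j R :: nat
  assumes "i < R" "\<forall>j'\<in>J. 1 \<le> j'"
  shows "(\<exists>j'\<in>J. \<exists>i'\<in>{1..R}. P j' i' \<and> Suc (j * R + i) = i' + (j' - 1) * R)
    \<longleftrightarrow> Suc j \<in> J \<and> P (Suc j) (Suc i)"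
proof
  assume "\<exists>j'\<in>J. \<exists>i'\<in>{1..R}. P j' i' \<and> Suc (j * R + i) = i' + (j' - 1) * R"
  then obtain j' i' where j': "j' \<in> J" "1 \<le> i'" "i' \<le> R" "P j' i'"
    and eq: "Suc (j * R + i) = i' + (j' - 1) * R" by auto
  have "j * R + i = (j' - 1) * R + (i' - 1)" using eq j'(2) by simp
  then have "j = j' - 1 \<and> i = i' - 1"
    using assms(1) j'(2,3) by (subst (asm) mult_add_eq_mult_add_iff) auto
  then show "Suc j \<in> J \<and> P (Suc j) (Suc i)" using j' assms(2) by auto
next
  assume "Suc j \<in> J \<and> P (Suc j) (Suc i)"
  then show "\<exists>j'\<in>J. \<exists>i'\<in>{1..R}. P j' i' \<and> Suc (j * R + i) = i' + (j' - 1) * R"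
    using assms(1) by (intro bexI[of _ "Suc j"] bexI[of _ "Suc i"]) auto
qed

lemma mixed_radix_cases:
  fixes p n m q :: nat
  assumes "p < n * (m * q)"
  obtains k j i where "k < n" "j < m" "i < q" "p = k * (m * q) + (j * q + i)"
proof -
  have "0 < m * q" using assms by (cases "m * q = 0") auto
  then have "0 < q" "p mod (m * q) < m * q" by simp_all
  then have "p div (m * q) < n" "p mod (m * q) div q < m" "p mod (m * q) mod q < q"
    using assms by (simp_all add: less_mult_imp_div_less mult.commute)
  moreover have "p = p div (m * q) * (m * q) + (p mod (m * q) div q * q + p mod (m * q) mod q)"
    by (metis div_mult_mod_eq)
  ultimately show ?thesis by (rule that)
qed

lemma mod_less_of_less_mult: "i < m * n \<Longrightarrow> i mod n < (n::nat)"
  by (cases "n = 0") simp_all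

lemma sum_lessThan_mult:
  "(\<Sum>e<m * q. g e) = (\<Sum>c<m. \<Sum>d<q. g (c * q + d :: nat))"
  by (simp add: sum.nat_group[symmetric] sum.atLeastLessThan_shift_0 atLeast0LessThan add.commute)

lemma sum_lessThan_add:
  "(\<Sum>e<p + q. g e) = (\<Sum>e<p. g e) + (\<Sum>e<q. g (p + e :: nat))"
  by (induction q) (simp_all add: add.assoc)

lemma mult_mat_vec_index_sum:
  assumes "i < dim_row A" "dim_vec x = dim_col A"
  shows "(A *\<^sub>v x) $ i = (\<Sum>j<dim_col A. A $$ (i, j) * x $ j)"
  using assms by (simp add: scalar_prod_def atLeast0LessThan)

lemma zero_mult_mat_vec_index:
  "i < n \<Longrightarrow> x \<in> carrier_vec m \<Longrightarrow> (0\<^sub>m n m *\<^sub>v x) $ i = (0 :: 'a :: semiring_0)"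
  by simp

lemma dim_kron [simp]:
  "dim_row (kron A B) = dim_row A * dim_row B" "dim_col (kron A B) = dim_col A * dim_col B"
  by (simp_all add: kron_def)

lemma index_kron:
  assumes "A \<in> carrier_mat n m" "B \<in> carrier_mat p q" "a < n" "b < p" "c < m" "d < q"
  shows "kron A B $$ (a * p + b, c * q + d) = A $$ (a, c) * B $$ (b, d)"
  using assms by (simp add: kron_def mult_add_less_mult)

lemma transpose_kron: "transpose_mat (kron A B) = kron (transpose_mat A) (transpose_mat B)"
  by (rule eq_matI) (auto simp: kron_def less_mult_imp_div_less mod_less_of_less_mult)

lemma kron_one_one: "kron (1\<^sub>m m) (1\<^sub>m n) = 1\<^sub>m (m * n)"
proof (rule eq_matI)
  fix i j assume "i < dim_row (1\<^sub>m (m * n))" "j < dim_col (1\<^sub>m (m * n))"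
  then have "i < m * n" "j < m * n" by simp_all
  moreover have "i = j \<longleftrightarrow> i div n = j div n \<and> i mod n = j mod n"
    by (metis div_mult_mod_eq)
  ultimately show "kron (1\<^sub>m m) (1\<^sub>m n) $$ (i, j) = 1\<^sub>m (m * n) $$ (i, j)"
    by (auto simp: kron_def less_mult_imp_div_less mod_less_of_less_mult)
qed simp_all

lemma kron_mult_vec_index:
  assumes "A \<in> carrier_mat n m" "B \<in> carrier_mat p q" "x \<in> carrier_vec (m * q)" "a < n" "b < p"
  shows "(kron A B *\<^sub>v x) $ (a * p + b) = (\<Sum>c<m. A $$ (a, c) * (\<Sum>d<q. B $$ (b, d) * x $ (c * q + d)))"
proof -
  have "(kron A B *\<^sub>v x) $ (a * p + b) = (\<Sum>e<m * q. kron A B $$ (a * p + b, e) * x $ e)"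
    using assms by (simp add: mult_mat_vec_index_sum mult_add_less_mult del: index_mult_mat_vec)
  also have "\<dots> = (\<Sum>c<m. \<Sum>d<q. A $$ (a, c) * B $$ (b, d) * x $ (c * q + d))"
    unfolding sum_lessThan_mult using assms by (intro sum.cong refl) (simp add: index_kron)
  finally show ?thesis by (simp add: sum_distrib_left mult.assoc)
qed

lemma kron_one_mult_vec:
  assumes "B \<in> carrier_mat p q" "x \<in> carrier_vec (n * q)" "k < n" "b < p"
  shows "(kron (1\<^sub>m n) B *\<^sub>v x) $ (k * p + b) = (B *\<^sub>v vec q (\<lambda>d. x $ (k * q + d))) $ b"
  using assms
  by (simp add: kron_mult_vec_index[OF one_carrier_mat assms(1)] mult_mat_vec_index_sum
      if_distrib[of "\<lambda>u. u * _"] cong: if_cong del: index_mult_mat_vec)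

lemma kron_mult_one_vec:
  assumes "A \<in> carrier_mat n m" "x \<in> carrier_vec (m * q)" "a < n" "b < q"
  shows "(kron A (1\<^sub>m q) *\<^sub>v x) $ (a * q + b) = (A *\<^sub>v vec m (\<lambda>c. x $ (c * q + b))) $ a"
proof -
  have "(kron A (1\<^sub>m q) *\<^sub>v x) $ (a * q + b) = (\<Sum>c<m. A $$ (a, c) * x $ (c * q + b))"
    using assms by (simp add: kron_mult_vec_index[OF assms(1) one_carrier_mat]
        if_distrib[of "\<lambda>u. u * _"] cong: if_cong)
  also have "\<dots> = (A *\<^sub>v vec m (\<lambda>c. x $ (c * q + b))) $ a"
    using assms by (simp add: mult_mat_vec_index_sum del: index_mult_mat_vec)
  finally show ?thesis .
qed

lemma transpose_kron_one_mult_vec: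
  assumes "V \<in> carrier_mat p q" "x \<in> carrier_vec (n * p)" "k < n" "c < q"
  shows "(transpose_mat (kron (1\<^sub>m n) V) *\<^sub>v x) $ (k * q + c)
    = (transpose_mat V *\<^sub>v vec p (\<lambda>e. x $ (k * p + e))) $ c"
  using assms by (simp add: transpose_kron kron_one_mult_vec)

lemma transpose_vstack_mult_vec:
  assumes "A \<in> carrier_mat p n" "B \<in> carrier_mat q n" "y \<in> carrier_vec (p + q)" "c < n"
  shows "(transpose_mat (vstack A B) *\<^sub>v y) $ c
    = (transpose_mat A *\<^sub>v vec p (\<lambda>e. y $ e)) $ c + (transpose_mat B *\<^sub>v vec q (\<lambda>e. y $ (p + e))) $ c"
  using assms
  by (simp add: mult_mat_vec_index_sum sum_lessThan_add vstack_def del: index_mult_mat_vec)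

lemma transpose_kron_one_vstack_mult_vec:
  assumes "A \<in> carrier_mat p m" "B \<in> carrier_mat q m" "x \<in> carrier_vec (n * (p + q))" "k < n" "c < m"
  shows "(transpose_mat (kron (1\<^sub>m n) (vstack A B)) *\<^sub>v x) $ (k * m + c)
    = (transpose_mat A *\<^sub>v vec p (\<lambda>e. x $ (k * (p + q) + e))) $ c
    + (transpose_mat B *\<^sub>v vec q (\<lambda>e. x $ (k * (p + q) + (p + e)))) $ c" (is "_ = ?rhs")
proof -
  define y where "y = vec (p + q) (\<lambda>e. x $ (k * (p + q) + e))"
  have "vstack A B \<in> carrier_mat (p + q) m" using assms(1,2) by (simp add: vstack_def)
  then have "(transpose_mat (kron (1\<^sub>m n) (vstack A B)) *\<^sub>v x) $ (k * m + c)
      = (transpose_mat (vstack A B) *\<^sub>v y) $ c"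
    unfolding y_def using assms(3-5) by (rule transpose_kron_one_mult_vec)
  also have "\<dots> = ?rhs"
  proof -
    have "y \<in> carrier_vec (p + q)" by (simp add: y_def)
    moreover have "vec p (\<lambda>e. y $ e) = vec p (\<lambda>e. x $ (k * (p + q) + e))"
      and "vec q (\<lambda>e. y $ (p + e)) = vec q (\<lambda>e. x $ (k * (p + q) + (p + e)))"
      by (auto simp: y_def)
    ultimately show ?thesis using transpose_vstack_mult_vec[OF assms(1,2) _ assms(5)] by simp
  qed
  finally show ?thesis .
qed

lemma dim_Dper [simp]: "dim_row (Dper q) = q" "dim_col (Dper q) = q"
  by (simp_all add: Dper_def)

lemma dim_Ddiff [simp]: "dim_row (Ddiff q) = q - 1" "dim_col (Ddiff q) = q"
  by (simp_all add: Ddiff_def)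

lemma Dper_mult_vec:
  assumes "x \<in> carrier_vec q" "k < q"
  shows "(Dper q *\<^sub>v x) $ k = x $ (Suc k mod q) - x $ k"
proof -
  have "(Dper q *\<^sub>v x) $ k = (\<Sum>a<q. Dper q $$ (k, a) * x $ a)"
    using assms by (simp add: mult_mat_vec_index_sum del: index_mult_mat_vec)
  also have "\<dots> = (\<Sum>a<q. (of_bool (a = Suc k mod q) - of_bool (a = k)) * x $ a)"
  proof -
    have "Suc k mod q = (if Suc k < q then Suc k else 0)" using assms(2) by (cases "Suc k = q") auto
    then show ?thesis using assms(2) by (intro sum.cong) (auto simp: Dper_def)
  qed
  finally show ?thesis using assms by (simp add: left_diff_distrib sum_subtractf)
qed

lemma Ddiff_mult_vec:
  assumes "x \<in> carrier_vec q" "Suc k < q"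
  shows "(Ddiff q *\<^sub>v x) $ k = x $ Suc k - x $ k"
proof -
  have "(Ddiff q *\<^sub>v x) $ k = (\<Sum>a<q. Ddiff q $$ (k, a) * x $ a)"
    using assms by (simp add: mult_mat_vec_index_sum del: index_mult_mat_vec)
  also have "\<dots> = (\<Sum>a<q. (of_bool (a = Suc k) - of_bool (a = k)) * x $ a)"
    using assms by (intro sum.cong) (auto simp: Ddiff_def)
  finally show ?thesis using assms by (simp add: left_diff_distrib sum_subtractf)
qed

lemma kron_one_kron_one_Dper_mult_vec:
  assumes "x \<in> carrier_vec (n * (m * q))" "k < n" "j < m" "i < q"
  shows "(kron (1\<^sub>m n) (kron (1\<^sub>m m) (Dper q)) *\<^sub>v x) $ (k * (m * q) + (j * q + i))
    = x $ (k * (m * q) + (j * q + Suc i mod q)) - x $ (k * (m * q) + (j * q + i))"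
proof -
  have "kron (1\<^sub>m m) (Dper q) \<in> carrier_mat (m * q) (m * q)" by (intro carrier_matI) simp_all
  then have "(kron (1\<^sub>m n) (kron (1\<^sub>m m) (Dper q)) *\<^sub>v x) $ (k * (m * q) + (j * q + i))
      = (kron (1\<^sub>m m) (Dper q) *\<^sub>v vec (m * q) (\<lambda>d. x $ (k * (m * q) + d))) $ (j * q + i)"
    using assms mult_add_less_mult[OF assms(3,4)] by (intro kron_one_mult_vec)
  also have "\<dots> = (Dper q *\<^sub>v vec q (\<lambda>d. vec (m * q) (\<lambda>d. x $ (k * (m * q) + d)) $ (j * q + d))) $ i"
    using assms(3,4) by (intro kron_one_mult_vec) auto
  also have "vec q (\<lambda>d. vec (m * q) (\<lambda>d. x $ (k * (m * q) + d)) $ (j * q + d))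
      = vec q (\<lambda>d. x $ (k * (m * q) + (j * q + d)))"
    using assms(3) by (auto simp: mult_add_less_mult)
  finally show ?thesis using assms(4) by (simp add: Dper_mult_vec del: index_mult_mat_vec)
qed

lemma kron_one_kron_Ddiff_one_mult_vec:
  assumes "x \<in> carrier_vec (n * (m * q))" "k < n" "Suc j < m" "i < q"
  shows "(kron (1\<^sub>m n) (kron (Ddiff m) (1\<^sub>m q)) *\<^sub>v x) $ (k * ((m - 1) * q) + (j * q + i))
    = x $ (k * (m * q) + (Suc j * q + i)) - x $ (k * (m * q) + (j * q + i))"
proof -
  have "kron (Ddiff m) (1\<^sub>m q) \<in> carrier_mat ((m - 1) * q) (m * q)" by (intro carrier_matI) simp_all
  then have "(kron (1\<^sub>m n) (kron (Ddiff m) (1\<^sub>m q)) *\<^sub>v x) $ (k * ((m - 1) * q) + (j * q + i))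
      = (kron (Ddiff m) (1\<^sub>m q) *\<^sub>v vec (m * q) (\<lambda>d. x $ (k * (m * q) + d))) $ (j * q + i)"
    using assms mult_add_less_mult[of j "m - 1" i q] by (intro kron_one_mult_vec) auto
  also have "\<dots> = (Ddiff m *\<^sub>v vec m (\<lambda>c. vec (m * q) (\<lambda>d. x $ (k * (m * q) + d)) $ (c * q + i))) $ j"
    using assms(3,4) by (intro kron_mult_one_vec) auto
  also have "vec m (\<lambda>c. vec (m * q) (\<lambda>d. x $ (k * (m * q) + d)) $ (c * q + i))
      = vec m (\<lambda>c. x $ (k * (m * q) + (c * q + i)))"
    using assms(4) by (auto simp: mult_add_less_mult)
  finally show ?thesis using assms(3) by (simp add: Ddiff_mult_vec del: index_mult_mat_vec)
qed

lemma kron_Dper_kron_one_one_mult_vec: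
  assumes "x \<in> carrier_vec (n * (m * q))" "k < n" "j < m" "i < q"
  shows "(kron (Dper n) (kron (1\<^sub>m m) (1\<^sub>m q)) *\<^sub>v x) $ (k * (m * q) + (j * q + i))
    = x $ (Suc k mod n * (m * q) + (j * q + i)) - x $ (k * (m * q) + (j * q + i))"
proof -
  have "(kron (Dper n) (kron (1\<^sub>m m) (1\<^sub>m q)) *\<^sub>v x) $ (k * (m * q) + (j * q + i))
      = (Dper n *\<^sub>v vec n (\<lambda>c. x $ (c * (m * q) + (j * q + i)))) $ k"
    unfolding kron_one_one using assms mult_add_less_mult[OF assms(3,4)]
    by (intro kron_mult_one_vec) auto
  then show ?thesis using assms(2) by (simp add: Dper_mult_vec del: index_mult_mat_vec)
qed

lemma EbarD_cyclic:
  assumes "i < nr"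
  shows "EbarD nr l (Suc i) = Ebar2 nr l (Suc (Suc i mod nr)) - Ebar2 nr l (Suc i)"
proof (cases "Suc i = nr")
  case True
  then show ?thesis by (simp add: EbarD_def Ebar2_def)
next
  case False
  then show ?thesis using assms by (simp add: EbarD_def)
qed

lemma nbar1_offset_less:
  assumes "i < nr" "m < 2 * (ns - 2)"
  shows "2 + i + m * nr < nbar1 nr ns"
  using mult_add_less_mult[OF assms(2,1)] by (simp add: nbar1_def algebra_simps)

lemma nr_add_nbar2: "2 \<le> ns \<Longrightarrow> nr + nbar2 nr ns = (ns - 1) * nr"
  by (induction ns rule: nat_induct_at_least) (auto simp: nbar2_def algebra_simps)

lemma E01_carrier_mat: "E01 nr ns \<in> carrier_mat (nbar1 nr ns) ((ns - 1) * nr)"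
  by (simp add: E01_def mult.commute)

lemma E10_carrier_mat: "E10 nr ns \<in> carrier_mat (nbar1 nr ns) (ns * nr)"
  by (simp add: E10_def mult.commute)

lemma E2_carrier_mat: "2 \<le> ns \<Longrightarrow> E2 nr ns \<in> carrier_mat (nbar2 nr ns) ((ns - 1) * nr)"
  by (simp add: E2_def hstack_def nr_add_nbar2)

lemma E01_index_col:
  assumes "a < nbar1 nr ns" "i < nr" "Suc j < ns"
  shows "E01 nr ns $$ (a, j * nr + i) =
    (if j = 0 then of_bool (a = 0) * (Ebar2 nr 2 (Suc i) - 1/3) + of_bool (a = 1) * (Ebar2 nr 3 (Suc i) - 1/3)
     else of_bool (a = 2 + i + 2 * (j - 1) * nr))"
proof -
  have "j * nr + i < (ns - 1) * nr" using assms(2,3) by (intro mult_add_less_mult) auto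
  then have entry: "E01 nr ns $$ (a, j * nr + i) = E01_entry nr ns (Suc a) (Suc (j * nr + i))"
    using assms(1) by (simp add: E01_def mult.commute)
  have digits: "(\<exists>j'\<in>{2..ns - 1}. \<exists>i'\<in>{1..nr}. P j' i' \<and> Suc (j * nr + i) = i' + (j' - 1) * nr)
      \<longleftrightarrow> Suc j \<in> {2..ns - 1} \<and> P (Suc j) (Suc i)" for P
    using assms(2) by (intro bex_mixed_radix_iff) auto
  show ?thesis
  proof (cases "j = 0")
    case True
    then show ?thesis
      unfolding entry E01_entry_def digits using assms(2)
      by (simp add: Ebar1_def numeral_eq_Suc)
  next
    case False
    then show ?thesis
      unfolding entry E01_entry_def digits using assms(2,3)
      by (simp add: Suc_mult_add_le_iff right_diff_distrib')
  qed
qed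

lemma E10_index_col:
  assumes "a < nbar1 nr ns" "i < nr" "j < ns"
  shows "E10 nr ns $$ (a, j * nr + i) =
    (if j = 1 then of_bool (a = 0) * EbarD nr 2 (Suc i) + of_bool (a = 1) * EbarD nr 3 (Suc i)
     else if 2 \<le> j then of_bool (a = 2 + i + (2 * j - 3) * nr) else 0)"
proof -
  have "j * nr + i < ns * nr" using assms(2,3) by (intro mult_add_less_mult)
  then have entry: "E10 nr ns $$ (a, j * nr + i) = E10_entry nr ns (Suc a) (Suc (j * nr + i))"
    using assms(1) by (simp add: E10_def mult.commute)
  have window: "nr < Suc (j * nr + i) \<and> Suc (j * nr + i) \<le> 2 * nr \<longleftrightarrow> j = 1"
    using assms(2) Suc_mult_add_le_iff[OF assms(2), of "j - 1"] by (cases j) auto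
  have digits: "(\<exists>j'\<in>{3..ns}. \<exists>i'\<in>{1..nr}. P j' i' \<and> Suc (j * nr + i) = i' + (j' - 1) * nr)
      \<longleftrightarrow> Suc j \<in> {3..ns} \<and> P (Suc j) (Suc i)" for P
    using assms(2) by (intro bex_mixed_radix_iff) auto
  show ?thesis
    unfolding entry E10_entry_def digits window using assms(2,3)
    by (auto simp: numeral_eq_Suc)
qed

lemma E01_transpose_mult_vec:
  assumes "z \<in> carrier_vec (nbar1 nr ns)" "i < nr" "Suc j < ns"
  shows "(transpose_mat (E01 nr ns) *\<^sub>v z) $ (j * nr + i) =
    (if j = 0 then (Ebar2 nr 2 (Suc i) - 1/3) * z $ 0 + (Ebar2 nr 3 (Suc i) - 1/3) * z $ 1
     else z $ (2 + i + 2 * (j - 1) * nr))" (is "_ = ?rhs")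
proof -
  have "j * nr + i < (ns - 1) * nr" using assms(2,3) by (intro mult_add_less_mult) auto
  then have "(transpose_mat (E01 nr ns) *\<^sub>v z) $ (j * nr + i)
      = (\<Sum>a<nbar1 nr ns. E01 nr ns $$ (a, j * nr + i) * z $ a)"
    using assms(1) by (simp add: mult_mat_vec_index_sum E01_def mult.commute del: index_mult_mat_vec)
  also have "\<dots> = (\<Sum>a<nbar1 nr ns. (if j = 0 then of_bool (a = 0) * (Ebar2 nr 2 (Suc i) - 1/3)
      + of_bool (a = 1) * (Ebar2 nr 3 (Suc i) - 1/3) else of_bool (a = 2 + i + 2 * (j - 1) * nr)) * z $ a)"
    using assms(2,3) by (intro sum.cong refl) (simp add: E01_index_col)
  also have "\<dots> = ?rhs"
  proof (cases "j = 0")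
    case True
    have "Suc 0 < nbar1 nr ns" by (simp add: nbar1_def)
    with True show ?thesis by (simp add: distrib_right sum.distrib mult.assoc)
  next
    case False
    have "2 + i + 2 * (j - 1) * nr < nbar1 nr ns"
      using assms(2,3) False by (intro nbar1_offset_less) auto
    with False show ?thesis by simp
  qed
  finally show ?thesis .
qed

lemma E10_transpose_mult_vec:
  assumes "z \<in> carrier_vec (nbar1 nr ns)" "i < nr" "j < ns"
  shows "(transpose_mat (E10 nr ns) *\<^sub>v z) $ (j * nr + i) =
    (if j = 1 then EbarD nr 2 (Suc i) * z $ 0 + EbarD nr 3 (Suc i) * z $ 1
     else if 2 \<le> j then z $ (2 + i + (2 * j - 3) * nr) else 0)" (is "_ = ?rhs")
proof -
  have "j * nr + i < ns * nr" using assms(2,3) by (intro mult_add_less_mult)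
  then have "(transpose_mat (E10 nr ns) *\<^sub>v z) $ (j * nr + i)
      = (\<Sum>a<nbar1 nr ns. E10 nr ns $$ (a, j * nr + i) * z $ a)"
    using assms(1) by (simp add: mult_mat_vec_index_sum E10_def mult.commute del: index_mult_mat_vec)
  also have "\<dots> = (\<Sum>a<nbar1 nr ns. (if j = 1 then of_bool (a = 0) * EbarD nr 2 (Suc i)
      + of_bool (a = 1) * EbarD nr 3 (Suc i) else if 2 \<le> j then of_bool (a = 2 + i + (2 * j - 3) * nr)
      else 0) * z $ a)"
    using assms(2,3) by (intro sum.cong refl) (simp add: E10_index_col)
  also have "\<dots> = ?rhs"
  proof -
    have "Suc 0 < nbar1 nr ns" by (simp add: nbar1_def)
    moreover have "2 + i + (2 * j - 3) * nr < nbar1 nr ns" if "2 \<le> j"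
      using assms(2,3) that by (intro nbar1_offset_less) auto
    ultimately show ?thesis by (simp add: distrib_right sum.distrib mult.assoc)
  qed
  finally show ?thesis .
qed

lemma E2_transpose_mult_vec:
  assumes "z \<in> carrier_vec (nbar2 nr ns)" "c < nr + nbar2 nr ns"
  shows "(transpose_mat (E2 nr ns) *\<^sub>v z) $ c = (if c < nr then 0 else z $ (c - nr))"
proof -
  have "(transpose_mat (E2 nr ns) *\<^sub>v z) $ c = (\<Sum>a<nbar2 nr ns. E2 nr ns $$ (a, c) * z $ a)"
    using assms by (simp add: mult_mat_vec_index_sum E2_def hstack_def del: index_mult_mat_vec)
  also have "\<dots> = (\<Sum>a<nbar2 nr ns. (if c < nr then 0 else of_bool (a = c - nr)) * z $ a)"
    using assms(2) by (intro sum.cong refl) (auto simp: E2_def hstack_def)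
  finally show ?thesis using assms(2) by simp
qed

definition nbar12 :: "nat \<Rightarrow> nat \<Rightarrow> nat" where
  "nbar12 nr ns = nbar2 nr ns + nbar1 nr ns"

lemma E011_transpose_mult_vec:
  assumes "h \<in> carrier_vec (nt * nbar12 nr ns)" "k < nt" "i < nr" "Suc j < ns"
  shows "(transpose_mat (E011 nr ns nt) *\<^sub>v h) $ (k * ((ns - 1) * nr) + (j * nr + i)) =
    (if j = 0 then (Ebar2 nr 2 (Suc i) - 1/3) * h $ (k * nbar12 nr ns + nbar2 nr ns)
       + (Ebar2 nr 3 (Suc i) - 1/3) * h $ (k * nbar12 nr ns + Suc (nbar2 nr ns))
     else h $ (k * nbar12 nr ns + (nbar2 nr ns + (2 + i + 2 * (j - 1) * nr))))"
proof -
  have c: "j * nr + i < (ns - 1) * nr" using assms(3,4) by (intro mult_add_less_mult) auto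
  have "Suc 0 < nbar1 nr ns" by (simp add: nbar1_def)
  moreover have "2 + i + 2 * (j - 1) * nr < nbar1 nr ns" if "j \<noteq> 0"
    using assms(3,4) that by (intro nbar1_offset_less) auto
  moreover note transpose_kron_one_vstack_mult_vec[OF zero_carrier_mat E01_carrier_mat
      assms(1)[unfolded nbar12_def] assms(2) c]
  ultimately show ?thesis
    using assms(3,4) c by (simp add: E011_def nbar12_def E01_transpose_mult_vec mult.commute)
qed

lemma E101_transpose_mult_vec:
  assumes "h \<in> carrier_vec (nt * nbar12 nr ns)" "k < nt" "i < nr" "j < ns"
  shows "(transpose_mat (E101 nr ns nt) *\<^sub>v h) $ (k * (ns * nr) + (j * nr + i)) =
    - (if j = 1 then EbarD nr 2 (Suc i) * h $ (k * nbar12 nr ns + nbar2 nr ns)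
         + EbarD nr 3 (Suc i) * h $ (k * nbar12 nr ns + Suc (nbar2 nr ns))
       else if 2 \<le> j then h $ (k * nbar12 nr ns + (nbar2 nr ns + (2 + i + (2 * j - 3) * nr))) else 0)"
proof -
  have c: "j * nr + i < ns * nr" using assms(3,4) by (intro mult_add_less_mult)
  have "Suc 0 < nbar1 nr ns" by (simp add: nbar1_def)
  moreover have "2 + i + (2 * j - 3) * nr < nbar1 nr ns" if "2 \<le> j"
    using assms(3,4) that by (intro nbar1_offset_less) auto
  moreover note transpose_kron_one_vstack_mult_vec[OF zero_carrier_mat uminus_carrier_mat[OF E10_carrier_mat]
      assms(1)[unfolded nbar12_def] assms(2) c]
  ultimately show ?thesis
    using assms(3,4) c carrier_matD[OF E10_carrier_mat]
    by (simp add: E101_def nbar12_def E10_transpose_mult_vec transpose_uminus mult.commute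
        zero_mult_mat_vec_index del: index_mult_mat_vec)
qed

lemma E110_transpose_mult_vec:
  assumes "h \<in> carrier_vec (nt * nbar12 nr ns)" "k < nt" "i < nr" "Suc j < ns"
  shows "(transpose_mat (E110 nr ns nt) *\<^sub>v h) $ (k * ((ns - 1) * nr) + (j * nr + i)) =
    (if j = 0 then 0 else h $ (k * nbar12 nr ns + ((j - 1) * nr + i)))"
proof -
  have c: "j * nr + i < (ns - 1) * nr" using assms(3,4) by (intro mult_add_less_mult) auto
  have "j * nr + i < nr \<longleftrightarrow> j = 0" and "j \<noteq> 0 \<Longrightarrow> j * nr + i - nr = (j - 1) * nr + i"
    using assms(3) by (cases j; simp)+
  moreover have "(j - 1) * nr + i < nbar2 nr ns" if "j \<noteq> 0"
    using mult_add_less_mult[of "j - 1" "ns - 2" i nr] assms(3,4) that by (simp add: nbar2_def mult.commute)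
  moreover note transpose_kron_one_vstack_mult_vec[OF E2_carrier_mat zero_carrier_mat
      assms(1)[unfolded nbar12_def] assms(2) c]
  ultimately show ?thesis
    using assms(3,4) nr_add_nbar2[of ns nr] c
    by (simp add: E110_def nbar12_def E2_transpose_mult_vec mult.commute)
qed

lemma E111_transpose_mult_vec:
  assumes "v \<in> carrier_vec (nt * nbar2 nr ns)" "k < nt" "i < nr" "Suc j < ns"
  shows "(transpose_mat (E111 nr ns nt) *\<^sub>v v) $ (k * ((ns - 1) * nr) + (j * nr + i)) =
    (if j = 0 then 0 else v $ (k * nbar2 nr ns + ((j - 1) * nr + i)))"
proof -
  have c: "j * nr + i < (ns - 1) * nr" using assms(3,4) by (intro mult_add_less_mult) auto
  have "j * nr + i < nr \<longleftrightarrow> j = 0" and "j \<noteq> 0 \<Longrightarrow> j * nr + i - nr = (j - 1) * nr + i"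
    using assms(3) by (cases j; simp)+
  moreover have "(j - 1) * nr + i < nbar2 nr ns" if "j \<noteq> 0"
    using mult_add_less_mult[of "j - 1" "ns - 2" i nr] assms(3,4) that by (simp add: nbar2_def mult.commute)
  moreover note transpose_kron_one_mult_vec[OF E2_carrier_mat assms(1,2) c]
  ultimately show ?thesis
    using assms(3,4) nr_add_nbar2[of ns nr] c
    by (simp add: E111_def E2_transpose_mult_vec)
qed

text \<open>
  Row (k, j, i) of D^(2), with 0-based j and k, in terms of two blocks of h of length
  nbar_2 + nbar_1: x is block k and x' the cyclically next block.
\<close>

definition D2_stencil :: "nat \<Rightarrow> nat \<Rightarrow> (nat \<Rightarrow> real) \<Rightarrow> (nat \<Rightarrow> real) \<Rightarrow> nat \<Rightarrow> nat \<Rightarrow> real" where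
  "D2_stencil nr ns x x' j i =
     (if j = 0 then
        x (nbar2 nr ns + (2 + Suc i mod nr)) - x (nbar2 nr ns + (2 + i)) - x (nbar2 nr ns + (2 + i + nr))
        + (EbarD nr 2 (Suc i) * x (nbar2 nr ns) + EbarD nr 3 (Suc i) * x (Suc (nbar2 nr ns)))
      else
        x (nbar2 nr ns + (2 + Suc i mod nr + 2 * j * nr)) - x (nbar2 nr ns + (2 + i + 2 * j * nr))
        - x (nbar2 nr ns + (2 + i + (2 * j + 1) * nr)) + x (nbar2 nr ns + (2 + i + (2 * j - 1) * nr)))
     + x' (j * nr + i) - x (j * nr + i)"

lemma D2_stencil_cong:
  assumes "i < nr" "Suc (Suc j) < ns"
    and "\<And>e. e < nbar12 nr ns \<Longrightarrow> x e = y e" "\<And>e. e < nbar12 nr ns \<Longrightarrow> x' e = y' e"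
  shows "D2_stencil nr ns x x' j i = D2_stencil nr ns y y' j i"
proof -
  have offset: "nbar2 nr ns + (2 + i' + m * nr) < nbar12 nr ns" if "i' < nr" "m \<le> 2 * j + 1" for i' m
    using nbar1_offset_less[of i' nr m ns] that assms(2) by (simp add: nbar12_def)
  have "Suc i mod nr < nr" using assms(1) by simp
  then have "nbar2 nr ns + (2 + Suc i mod nr) < nbar12 nr ns" "nbar2 nr ns + (2 + i) < nbar12 nr ns"
    "nbar2 nr ns + (2 + i + nr) < nbar12 nr ns"
    "nbar2 nr ns + (2 + Suc i mod nr + 2 * j * nr) < nbar12 nr ns"
    "nbar2 nr ns + (2 + i + 2 * j * nr) < nbar12 nr ns"
    "nbar2 nr ns + (2 + i + (2 * j + 1) * nr) < nbar12 nr ns"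
    "nbar2 nr ns + (2 + i + (2 * j - 1) * nr) < nbar12 nr ns"
    using offset[of _ 0] offset[of _ 1] offset[of _ "2 * j"] offset[of _ "2 * j + 1"] offset[of _ "2 * j - 1"]
      assms(1) by simp_all
  moreover have "Suc (nbar2 nr ns) < nbar12 nr ns" by (simp add: nbar12_def nbar1_def)
  moreover have "j * nr + i < nbar12 nr ns"
    using mult_add_less_mult[of j "ns - 2" i nr] assms(1,2) by (simp add: nbar12_def nbar2_def mult.commute less_diff_conv)
  ultimately show ?thesis by (simp add: D2_stencil_def assms(3,4))
qed

lemma D2_stencil_sum:
  "(\<Sum>q\<in>Q. D2_stencil nr ns (x q) (x' q) j i * w q)
    = D2_stencil nr ns (\<lambda>e. \<Sum>q\<in>Q. x q e * w q) (\<lambda>e. \<Sum>q\<in>Q. x' q e * w q) j i"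
  by (cases "j = 0")
    (simp_all add: D2_stencil_def algebra_simps sum.distrib sum_subtractf sum_distrib_left)

lemma cyclic_block_index:
  fixes k n b e :: nat
  assumes "k < n" "e < b"
  shows "(if n * b < Suc (k * b + e) then Suc (k * b + e) - n * b else Suc (k * b + e))
      = Suc (k * b + e)"
    and "(if n * b < Suc (Suc k * b + e) then Suc (Suc k * b + e) - n * b else Suc (Suc k * b + e))
      = Suc (Suc k mod n * b + e)"
proof -
  show "(if n * b < Suc (k * b + e) then Suc (k * b + e) - n * b else Suc (k * b + e)) = Suc (k * b + e)"
    using mult_add_less_mult[OF assms] by simp
  show "(if n * b < Suc (Suc k * b + e) then Suc (Suc k * b + e) - n * b else Suc (Suc k * b + e))
      = Suc (Suc k mod n * b + e)"
  proof (cases "Suc k < n")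
    case True
    then show ?thesis using mult_add_less_mult[OF True assms(2)] by simp
  next
    case False
    then have "Suc k = n" using assms(1) by simp
    then show ?thesis by auto
  qed
qed

lemma D2map_row:
  fixes g :: "nat \<Rightarrow> real" and nt k :: nat
  assumes "i < nr" "Suc (Suc j) < ns"
  defines "W \<equiv> \<lambda>q. if nn2 nr ns nt < q then q - nn2 nr ns nt else q"
  shows "D2map nr ns nt g (Suc (k * nbar2 nr ns + (j * nr + i)))
    = D2_stencil nr ns (\<lambda>e. g (W (Suc (k * nbar12 nr ns + e)))) (\<lambda>e. g (W (Suc (Suc k * nbar12 nr ns + e)))) j i"
proof -
  have "j * nr + i < nbar2 nr ns"
    using mult_add_less_mult[of j "ns - 2" i nr] assms(1,2) by (simp add: nbar2_def mult.commute less_diff_conv)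
  then have "(k * nbar2 nr ns + (j * nr + i)) div nbar2 nr ns = k"
    "(k * nbar2 nr ns + (j * nr + i)) mod nbar2 nr ns = j * nr + i"
    "(j * nr + i) div nr = j" "(j * nr + i) mod nr = i"
    using assms(1) by simp_all
  moreover have "(if Suc i < nr then Suc i + 1 else 1) = Suc (Suc i mod nr)"
    using assms(1) by (cases "Suc i = nr") auto
  moreover have "(\<Sum>l = 1..2. f l) = f 1 + f 2" for f :: "nat \<Rightarrow> real"
    by (simp add: numeral_2_eq_2)
  moreover have "(if nn2 nr ns nt < q then q - nn2 nr ns nt else q) = W q" for q
    by (simp add: W_def)
  ultimately show ?thesis
    unfolding D2map_def D2_stencil_def Let_def
    by (simp only: diff_Suc_1 Suc_eq_plus1[symmetric]) (simp add: nbar12_def algebra_simps numeral_2_eq_2[symmetric])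
qed

lemma D2_mult_vec:
  assumes "h \<in> carrier_vec (nt * nbar12 nr ns)" "k < nt" "i < nr" "Suc (Suc j) < ns"
  shows "(D2 nr ns nt *\<^sub>v h) $ (k * nbar2 nr ns + (j * nr + i))
    = D2_stencil nr ns (\<lambda>e. h $ (k * nbar12 nr ns + e)) (\<lambda>e. h $ (Suc k mod nt * nbar12 nr ns + e)) j i"
proof -
  define r where "r = k * nbar2 nr ns + (j * nr + i)"
  define N where "N = nt * nbar12 nr ns"
  have N: "nn2 nr ns nt = N" by (simp add: N_def nn2_def nbar12_def add.commute)
  have "j * nr + i < nbar2 nr ns"
    using mult_add_less_mult[of j "ns - 2" i nr] assms(3,4) by (simp add: nbar2_def mult.commute less_diff_conv)
  then have "r < nn3 nr ns nt" unfolding r_def nn3_def by (rule mult_add_less_mult[OF assms(2)])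
  then have "(D2 nr ns nt *\<^sub>v h) $ r = (\<Sum>q<N. D2map nr ns nt (\<lambda>p. if p = Suc q then 1 else 0) (Suc r) * h $ q)"
    using assms(1) by (simp add: mult_mat_vec_index_sum D2_def N N_def del: index_mult_mat_vec)
  also have "\<dots> = (\<Sum>q<N. D2_stencil nr ns (\<lambda>e. of_bool (k * nbar12 nr ns + e = q))
      (\<lambda>e. of_bool (Suc k mod nt * nbar12 nr ns + e = q)) j i * h $ q)"
  proof (intro sum.cong refl arg_cong2[where f = "(*)"])
    fix q
    show "D2map nr ns nt (\<lambda>p. if p = Suc q then 1 else 0) (Suc r) = D2_stencil nr ns
      (\<lambda>e. of_bool (k * nbar12 nr ns + e = q)) (\<lambda>e. of_bool (Suc k mod nt * nbar12 nr ns + e = q)) j i"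
      unfolding r_def D2map_row[OF assms(3,4)] N N_def
      by (rule D2_stencil_cong[OF assms(3,4)]) (simp_all only: cyclic_block_index[OF assms(2)], simp_all)
  qed
  also have "\<dots> = D2_stencil nr ns (\<lambda>e. \<Sum>q<N. of_bool (k * nbar12 nr ns + e = q) * h $ q)
      (\<lambda>e. \<Sum>q<N. of_bool (Suc k mod nt * nbar12 nr ns + e = q) * h $ q) j i"
    by (rule D2_stencil_sum)
  also have "\<dots> = D2_stencil nr ns (\<lambda>e. h $ (k * nbar12 nr ns + e)) (\<lambda>e. h $ (Suc k mod nt * nbar12 nr ns + e)) j i"
    using assms(2) mult_add_less_mult[OF assms(2)] mult_add_less_mult[of "Suc k mod nt" nt]
    by (intro D2_stencil_cong[OF assms(3,4)]) (simp_all add: N_def)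
  finally show ?thesis unfolding r_def .
qed

lemma E_transpose_differences_eq_D2_stencil:
  assumes "h \<in> carrier_vec (nt * nbar12 nr ns)" "k < nt" "i < nr" "Suc j < ns"
  defines "h1 \<equiv> transpose_mat (E011 nr ns nt) *\<^sub>v h"
    and "h2 \<equiv> transpose_mat (E101 nr ns nt) *\<^sub>v h"
    and "h3 \<equiv> transpose_mat (E110 nr ns nt) *\<^sub>v h"
    and "Q \<equiv> (ns - 1) * nr"
    and "X \<equiv> \<lambda>e. h $ (k * nbar12 nr ns + e)"
    and "X' \<equiv> \<lambda>e. h $ (Suc k mod nt * nbar12 nr ns + e)"
  shows "(h1 $ (k * Q + (j * nr + Suc i mod nr)) - h1 $ (k * Q + (j * nr + i)))
    + (h2 $ (k * (ns * nr) + (Suc j * nr + i)) - h2 $ (k * (ns * nr) + (j * nr + i)))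
    + (h3 $ (Suc k mod nt * Q + (j * nr + i)) - h3 $ (k * Q + (j * nr + i)))
    = (if j = 0 then 0 else D2_stencil nr ns X X' (j - 1) i)"
proof -
  have "Suc i mod nr < nr" "Suc k mod nt < nt" "j < ns" using assms(2-4) by simp_all
  have H1: "h1 $ (k * Q + (j * nr + i')) = (if j = 0
      then (Ebar2 nr 2 (Suc i') - 1/3) * X (nbar2 nr ns) + (Ebar2 nr 3 (Suc i') - 1/3) * X (Suc (nbar2 nr ns))
      else X (nbar2 nr ns + (2 + i' + 2 * (j - 1) * nr)))" if "i' < nr" for i'
    unfolding h1_def X_def Q_def by (rule E011_transpose_mult_vec[OF assms(1,2) that assms(4)])
  have H2: "h2 $ (k * (ns * nr) + (j'' * nr + i)) =
    - (if j'' = 1 then EbarD nr 2 (Suc i) * X (nbar2 nr ns) + EbarD nr 3 (Suc i) * X (Suc (nbar2 nr ns))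
       else if 2 \<le> j'' then X (nbar2 nr ns + (2 + i + (2 * j'' - 3) * nr)) else 0)" if "j'' < ns" for j''
    unfolding h2_def X_def by (rule E101_transpose_mult_vec[OF assms(1-3) that])
  have H3: "h3 $ (k * Q + (j * nr + i)) = (if j = 0 then 0 else X ((j - 1) * nr + i))"
    "h3 $ (Suc k mod nt * Q + (j * nr + i)) = (if j = 0 then 0 else X' ((j - 1) * nr + i))"
    unfolding h3_def X_def X'_def Q_def
    by (rule E110_transpose_mult_vec[OF assms(1) _ assms(3,4)], fact)+
  show ?thesis
  proof (cases j)
    case 0
    then show ?thesis
      unfolding H1[OF \<open>Suc i mod nr < nr\<close>] H1[OF assms(3)] H2[OF \<open>j < ns\<close>] H2[OF assms(4)] H3
      by (simp add: EbarD_cyclic[OF assms(3)] algebra_simps)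
  next
    case (Suc j0)
    have "2 * Suc j0 - 3 = 2 * j0 - 1" "2 * Suc (Suc j0) - 3 = 2 * j0 + 1" by simp_all
    then show ?thesis
      unfolding H1[OF \<open>Suc i mod nr < nr\<close>] H1[OF assms(3)] H2[OF \<open>j < ns\<close>] H2[OF assms(4)] H3
      using Suc by (simp add: D2_stencil_def)
  qed
qed

theorem proposition3p5:
  fixes nr ns nt :: nat and h :: "real vec"
  assumes "nr \<ge> 1" and "ns \<ge> 3" and "nt \<ge> 1"
    and "h \<in> carrier_vec (nn2 nr ns nt)"
  defines "h1 \<equiv> transpose_mat (E011 nr ns nt) *\<^sub>v h"
    and "h2 \<equiv> transpose_mat (E101 nr ns nt) *\<^sub>v h"
    and "h3 \<equiv> transpose_mat (E110 nr ns nt) *\<^sub>v h"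
  shows "kron (1\<^sub>m nt) (kron (1\<^sub>m (ns - 1)) (Dper nr)) *\<^sub>v h1
         + kron (1\<^sub>m nt) (kron (Ddiff ns) (1\<^sub>m nr)) *\<^sub>v h2
         + kron (Dper nt) (kron (1\<^sub>m (ns - 1)) (1\<^sub>m nr)) *\<^sub>v h3
         = transpose_mat (E111 nr ns nt) *\<^sub>v (D2 nr ns nt *\<^sub>v h)" (is "?L = ?R")
proof (rule eq_vecI)
  have h: "h \<in> carrier_vec (nt * nbar12 nr ns)"
    using assms(4) by (simp add: nn2_def nbar12_def add.commute)
  have dims: "h1 \<in> carrier_vec (nt * ((ns - 1) * nr))" "h2 \<in> carrier_vec (nt * (ns * nr))"
    "h3 \<in> carrier_vec (nt * ((ns - 1) * nr))" "D2 nr ns nt *\<^sub>v h \<in> carrier_vec (nt * nbar2 nr ns)"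
    "dim_vec ?R = nt * ((ns - 1) * nr)"
    using nr_add_nbar2[of ns nr] assms(2) unfolding carrier_vec_def
    by (simp_all add: h1_def h2_def h3_def E011_def E101_def E110_def E111_def vstack_def E2_def
        hstack_def D2_def nn3_def mult.commute)
  then show "dim_vec ?L = dim_vec ?R" by simp
  fix p assume "p < dim_vec ?R"
  then obtain k j i where k: "k < nt" and j: "j < ns - 1" and i: "i < nr"
    and p: "p = k * ((ns - 1) * nr) + (j * nr + i)" using dims(5) by (metis mixed_radix_cases)
  then have j': "Suc j < ns" by simp
  have "?L $ p = (h1 $ (k * ((ns - 1) * nr) + (j * nr + Suc i mod nr)) - h1 $ p)
    + (h2 $ (k * (ns * nr) + (Suc j * nr + i)) - h2 $ (k * (ns * nr) + (j * nr + i)))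
    + (h3 $ (Suc k mod nt * ((ns - 1) * nr) + (j * nr + i)) - h3 $ p)"
    using kron_one_kron_one_Dper_mult_vec[OF dims(1) k j i]
      kron_one_kron_Ddiff_one_mult_vec[OF dims(2) k j' i]
      kron_Dper_kron_one_one_mult_vec[OF dims(3) k j i] dims \<open>p < dim_vec ?R\<close>
    unfolding p by simp
  also have "\<dots> = (if j = 0 then 0 else D2_stencil nr ns (\<lambda>e. h $ (k * nbar12 nr ns + e))
      (\<lambda>e. h $ (Suc k mod nt * nbar12 nr ns + e)) (j - 1) i)"
    unfolding p h1_def h2_def h3_def by (rule E_transpose_differences_eq_D2_stencil[OF h k i j'])
  also have "\<dots> = ?R $ p"
    using E111_transpose_mult_vec[OF dims(4) k i j'] D2_mult_vec[OF h k i, of "j - 1"] j'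
    unfolding p by (cases j) simp_all
  finally show "?L $ p = ?R $ p" .
qed

end
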